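(* Let $n\ge1$, let $R,L\subseteq\{0,1,\dots,n-1\}$, let $S_1=\{a^{2r}\mid r\in R\}\cup\{a^{2l}b,\ a^{-2l}b^2\mid l\in L\}$, and let $S_2\subseteq \langle a^2\rangle a\cup\langle a^2\rangle ab\cup\langle a^2\rangle ab^2$, such that $S=S_1\cup S_2$ satisfies $1\notin S=S^{-1}$. Put $S_R=\{a^{2r}\mid r\in R\}$ and $S_L=\{a^{2l}\mid l\in L\}$ and assume $S_L=S_L^{-1}$. Then $\mathrm{Cay}(U_{6n},S)$ is integral if and only if both of the following hold for all $0\le j\le 2n-1$ and $0\le k\le n-1$: (1) $3\rho_j(S_R)+\chi_j(S_2)$ and $3\rho_j(S_L)+\chi_j(S_2)$ are integers; (2) $2\psi_k(S_2^2)$ is a perfect square (the square of an integer).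
   Context: For an integer $n\ge1$, $U_{6n}=\langle a,b\mid a^{2n}=b^3=1,\ a^{-1}ba=b^{-1}\rangle$, a group of order $6n$ whose elements are uniquely $a^ib^\epsilon$ with $0\le i\le 2n-1$, $\epsilon\in\{0,1,2\}$. Let $\omega=\exp(\pi\imath/n)$. Its irreducible complex characters are: the $2n$ linear characters $\chi_j$ ($0\le j\le 2n-1$) given by $\chi_j(a^{2r}b^\epsilon)=\omega^{2jr}$ and $\chi_j(a^{2r+1}b^\epsilon)=\omega^{j(2r+1)}$ for all $\epsilon\in\{0,1,2\}$; and the $n$ degree-two characters $\psi_k$ ($0\le k\le n-1$) given by $\psi_k(a^{2r})=2\omega^{2kr}$, $\psi_k(a^{2r}b)=\psi_k(a^{2r}b^2)=-\omega^{2kr}$, $\psi_k(a^{2r+1}b^\epsilon)=0$. The irreducible characters of the cyclic subgroup $\langle a\rangle$ (order $2n$) are $\rho_j$, $0\le j\le 2n-1$, with $\rho_j(a^m)=\omega^{jm}$. For a character $\chi$ and subsets $A$ of a group, $\chi(A)=\sum_{x\in A}\chi(x)$ (with $\chi(\emptyset)=0$) and $\chi(A^2)=\sum_{x_1,x_2\in A}\chi(x_1x_2)$, the sum running over all ordered pairs. For a group $G$ and $S\subseteq G$ with $1\notin S=S^{-1}$, the Cayley graph $\mathrm{Cay}(G,S)$ has vertex set $G$ and edges $\{g,sg\}$ for $g\in G,s\in S$. A graph is integral if all eigenvalues of its adjacency matrix are integers. *)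

theory Defs
  imports Complex_Main
begin

text \<open>Concrete model of U_{6n}: the element a^i b^e (0 <= i < 2n, 0 <= e < 3) is the pair (i, e).
  Relation a^{-1} b a = b^{-1} gives b^e a^j = a^j b^{(-1)^j e}.\<close>

type_synonym uelt = "int \<times> int"

definition U :: "nat \<Rightarrow> uelt set" where
  "U n = {0..<2 * int n} \<times> {0..<3}"

definition elt :: "nat \<Rightarrow> int \<Rightarrow> int \<Rightarrow> uelt" where
  "elt n i e = (i mod (2 * int n), e mod 3)"

definition umult :: "nat \<Rightarrow> uelt \<Rightarrow> uelt \<Rightarrow> uelt" where
  "umult n x y = (case x of (i, e) \<Rightarrow> case y of (j, d) \<Rightarrow>
      elt n (i + j) ((if even j then e else - e) + d))"

definition uone :: "nat \<Rightarrow> uelt" where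
  "uone n = elt n 0 0"

definition uinv :: "nat \<Rightarrow> uelt \<Rightarrow> uelt" where
  "uinv n x = (case x of (i, e) \<Rightarrow> elt n (- i) (if even i then - e else e))"

definition uinvset :: "nat \<Rightarrow> uelt set \<Rightarrow> uelt set" where
  "uinvset n A = uinv n ` A"

definition omega :: "nat \<Rightarrow> complex" where
  "omega n = exp (complex_of_real pi * \<i> / of_nat n)"

definition chi :: "nat \<Rightarrow> nat \<Rightarrow> uelt \<Rightarrow> complex" where
  "chi n j x = (case x of (i, e) \<Rightarrow>
     (if even i then omega n ^ (2 * j * nat (i div 2))
      else omega n ^ (j * (2 * nat (i div 2) + 1))))"

definition psi :: "nat \<Rightarrow> nat \<Rightarrow> uelt \<Rightarrow> complex" where
  "psi n k x = (case x of (i, e) \<Rightarrow>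
     (if even i then (if e = 0 then 2 * omega n ^ (2 * k * nat (i div 2))
                      else - (omega n ^ (2 * k * nat (i div 2))))
      else 0))"

definition rho :: "nat \<Rightarrow> nat \<Rightarrow> uelt \<Rightarrow> complex" where
  "rho n j x = omega n ^ (j * nat (fst x))"

definition charsum :: "(uelt \<Rightarrow> complex) \<Rightarrow> uelt set \<Rightarrow> complex" where
  "charsum f A = (\<Sum>x\<in>A. f x)"

definition charsum2 :: "nat \<Rightarrow> (uelt \<Rightarrow> complex) \<Rightarrow> uelt set \<Rightarrow> complex" where
  "charsum2 n f A = (\<Sum>x1\<in>A. \<Sum>x2\<in>A. f (umult n x1 x2))"

definition cay_adj :: "nat \<Rightarrow> uelt set \<Rightarrow> uelt \<Rightarrow> uelt \<Rightarrow> complex" where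
  "cay_adj n S g h = (if \<exists>s\<in>S. h = umult n s g then 1 else 0)"

definition cay_eigenvalue :: "nat \<Rightarrow> uelt set \<Rightarrow> complex \<Rightarrow> bool" where
  "cay_eigenvalue n S mu \<longleftrightarrow>
     (\<exists>v :: uelt \<Rightarrow> complex. (\<exists>g\<in>U n. v g \<noteq> 0) \<and>
        (\<forall>g\<in>U n. (\<Sum>h\<in>U n. cay_adj n S g h * v h) = mu * v g))"

definition cay_integral :: "nat \<Rightarrow> uelt set \<Rightarrow> bool" where
  "cay_integral n S \<longleftrightarrow> (\<forall>mu. cay_eigenvalue n S mu \<longrightarrow> mu \<in> \<int>)"

end

theory Submission
  imports Defs "HOL-Algebra.Group" "Jordan_Normal_Form.Char_Poly"
begin

text \<open>
  The eigenvalues of a Cayley graph \<open>Cay(G, S)\<close> are those of the matrices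
  \<open>\<sigma>(S) = \<Sum>\<^sub>s\<^sub>\<in>\<^sub>S \<sigma>(s)\<close> for the irreducible representations \<open>\<sigma>\<close> of \<open>G\<close>: every \<open>\<sigma>(S)\<close> contributes its
  eigenvalues, and conversely an eigenvector has a nonzero Fourier coefficient with respect to some
  matrix entry of some \<open>\<sigma>\<close>, because the regular character is \<open>6n \<delta>\<^sub>1 = \<Sum>\<^sub>j \<chi>\<^sub>j + 2 \<Sum>\<^sub>k \<psi>\<^sub>k\<close>.
  For the given \<open>S\<close>, \<open>\<chi>\<^sub>j(S) = \<rho>\<^sub>j(S\<^sub>R) + 2\<rho>\<^sub>j(S\<^sub>L) + \<chi>\<^sub>j(S\<^sub>2)\<close>, and the two-dimensional
  representation with trace \<open>\<psi>\<^sub>k\<close> gives the matrix \<open>[[c, X], [Y, c]]\<close> with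
  \<open>c = \<rho>\<^sub>k(S\<^sub>R) - \<rho>\<^sub>k(S\<^sub>L)\<close> and \<open>2XY = \<psi>\<^sub>k(S\<^sub>2\<^sup>2)\<close>, hence the eigenvalues \<open>c \<plusminus> t\<close> with \<open>t\<^sup>2 = XY\<close>.
  Now \<open>3\<rho>\<^sub>j(S\<^sub>R) + \<chi>\<^sub>j(S\<^sub>2) = \<chi>\<^sub>j(S) + (c + t) + (c - t)\<close> and
  \<open>3\<rho>\<^sub>j(S\<^sub>L) + \<chi>\<^sub>j(S\<^sub>2) = \<chi>\<^sub>j(S) - c\<close>; here \<open>c\<close> is an integer as soon as it is rational,
  being an eigenvalue of the integer matrix \<open>A(S\<^sub>R) - A(S\<^sub>L)\<close>. Conversely, the two conditions make
  every eigenvalue rational, and a rational eigenvalue of an integer matrix is an integer.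
\<close>

section \<open>Roots of unity\<close>

definition omega_int :: "nat \<Rightarrow> int \<Rightarrow> complex" where
  "omega_int n m = cis (pi * of_int m / real n)"

lemma omega_pow: "omega n ^ m = omega_int n (int m)"
proof -
  have "omega n = cis (pi / real n)"
    by (simp add: omega_def cis_conv_exp mult.commute)
  then show ?thesis
    by (simp add: omega_int_def DeMoivre ac_simps)
qed

lemma omega_int_0 [simp]: "omega_int n 0 = 1"
  by (simp add: omega_int_def)

lemma omega_int_add: "omega_int n (a + b) = omega_int n a * omega_int n b"
  by (simp add: omega_int_def cis_mult add_divide_distrib distrib_left)

lemma omega_int_pow: "omega_int n a ^ m = omega_int n (int m * a)"
  by (simp add: omega_int_def DeMoivre field_simps)

lemma omega_int_period: "omega_int n (2 * int n * t) = 1"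
proof (cases "n = 0")
  case False
  then have "pi * real_of_int (2 * int n * t) / real n = 2 * pi * real_of_int t"
    by (simp add: field_simps)
  then show ?thesis by (simp add: omega_int_def)
qed (simp add: omega_int_def)

lemma omega_int_mod: "omega_int n (a mod (2 * int n)) = omega_int n a"
proof -
  have "omega_int n a = omega_int n (a mod (2 * int n) + 2 * int n * (a div (2 * int n)))"
    by simp
  then show ?thesis by (simp only: omega_int_add omega_int_period mult_1_right)
qed

lemma omega_int_mult_mod: "omega_int n (j * (a mod (2 * int n))) = omega_int n (j * a)"
  by (metis omega_int_mod mod_mult_right_eq)

lemma omega_int_neq_1:
  assumes "n \<ge> 1" "0 < a" "a < 2 * int n" shows "omega_int n a \<noteq> 1"
proof
  assume "omega_int n a = 1"
  then have "cos (pi * real_of_int a / real n) = 1"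
    unfolding omega_int_def by (metis cis.sel(1) one_complex.sel(1))
  then obtain m :: int where "pi * real_of_int a / real n = real_of_int m * 2 * pi"
    using cos_one_2pi_int by blast
  then have "real_of_int a = real_of_int (m * (2 * int n))"
    using assms by (simp add: field_simps)
  then have a: "a = m * (2 * int n)"
    by (simp only: of_int_eq_iff)
  with assms have "m > 0" by (simp add: zero_less_mult_iff)
  then have "2 * int n \<le> m * (2 * int n)" using assms by simp
  with a assms show False by linarith
qed

lemma sum_powers_root_of_unity:
  fixes z :: "'a :: field"
  assumes "z ^ N = 1" shows "(\<Sum>k<N. z ^ k) = (if z = 1 then of_nat N else 0)"
  using assms by (simp add: geometric_sum)

lemma sum_omega_int_multiples:
  assumes "n \<ge> 1" "0 \<le> i" "i < 2 * int n"
  shows "(\<Sum>j<2 * n. omega_int n (int j * i)) = (if i = 0 then of_nat (2 * n) else 0)"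
proof -
  have "omega_int n i ^ (2 * n) = 1"
    using omega_int_period[of n i] by (simp add: omega_int_pow)
  then have "(\<Sum>j<2 * n. omega_int n i ^ j) = (if i = 0 then of_nat (2 * n) else 0)"
    using omega_int_neq_1[of n i] assms by (auto simp: sum_powers_root_of_unity)
  then show ?thesis by (simp add: omega_int_pow)
qed

lemma sum_omega_int_even_multiples:
  assumes "n \<ge> 1" "0 \<le> r" "r < int n"
  shows "(\<Sum>k<n. omega_int n (int k * (2 * r))) = (if r = 0 then of_nat n else 0)"
proof -
  have "omega_int n (2 * r) ^ n = 1"
    using omega_int_period[of n r] by (simp add: omega_int_pow ac_simps)
  then have "(\<Sum>k<n. omega_int n (2 * r) ^ k) = (if r = 0 then of_nat n else 0)"
    using omega_int_neq_1[of n "2 * r"] assms by (auto simp: sum_powers_root_of_unity)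
  then show ?thesis by (simp add: omega_int_pow)
qed

definition zeta3 :: "int \<Rightarrow> complex" where
  "zeta3 m = cis (2 * pi * of_int m / 3)"

lemma zeta3_0 [simp]: "zeta3 0 = 1"
  by (simp add: zeta3_def)

lemma zeta3_add: "zeta3 (a + b) = zeta3 a * zeta3 b"
  by (simp add: zeta3_def cis_mult add_divide_distrib distrib_left)

lemma zeta3_diff: "zeta3 (a - b) = zeta3 a * zeta3 (- b)"
  using zeta3_add[of a "- b"] by simp

lemma zeta3_mod: "zeta3 (a mod 3) = zeta3 a"
proof -
  have "zeta3 (3 * (a div 3)) = cis (2 * pi * real_of_int (a div 3))"
    unfolding zeta3_def by (rule arg_cong[where f = cis]) simp
  also have "\<dots> = 1"
    by (rule cis_multiple_2pi) simp
  finally have "zeta3 (3 * (a div 3)) = 1" .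
  moreover have "zeta3 a = zeta3 (a mod 3 + 3 * (a div 3))"
    by simp
  ultimately show ?thesis by (simp only: zeta3_add mult_1_right)
qed

lemma zeta3_1_plus_2: "zeta3 1 + zeta3 2 = -1"
proof -
  have eq: "2 * pi * 2 / 3 = pi + pi / 3" by simp
  have "cos (2 * pi * 2 / 3) = -1/2" "sin (2 * pi * 2 / 3) = - (sqrt 3 / 2)"
    unfolding eq cos_add sin_add by (simp_all add: cos_60 sin_60)
  moreover have "zeta3 1 = cis (2 * pi / 3)" "zeta3 2 = cis (2 * pi * 2 / 3)"
    by (simp_all add: zeta3_def)
  ultimately show ?thesis
    by (simp add: complex_eq_iff cos_120 sin_120)
qed

lemma zeta3_add_uminus: "zeta3 e + zeta3 (- e) = (if e mod 3 = 0 then 2 else -1)"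
proof -
  have "e mod 3 = 0 \<or> e mod 3 = 1 \<or> e mod 3 = 2" by linarith
  moreover have "(- e) mod 3 = (if e mod 3 = 0 then 0 else 3 - e mod 3)"
    by (simp add: zmod_zminus1_eq_if)
  ultimately show ?thesis
    using zeta3_mod[of e] zeta3_mod[of "- e"] zeta3_1_plus_2
    by (elim disjE) (simp_all add: add.commute)
qed

lemma left_eigenvector_2x2:
  fixes M :: "nat \<Rightarrow> nat \<Rightarrow> 'a :: field"
  assumes "(\<mu> - M 0 0) * (\<mu> - M 1 1) = M 0 1 * M 1 0"
  obtains w where "w 0 \<noteq> 0 \<or> w 1 \<noteq> 0" "\<And>r. r < 2 \<Longrightarrow> (\<Sum>p<2. w p * M p r) = \<mu> * w r"
proof -
  let ?a = "M 0 0 - \<mu>" and ?b = "M 1 0" and ?c = "M 0 1" and ?d = "M 1 1 - \<mu>"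
  have det: "?a * ?d = ?b * ?c"
    using assms by (simp add: algebra_simps)
  obtain x y where xy: "x \<noteq> 0 \<or> y \<noteq> 0" "?a * x + ?b * y = 0" "?c * x + ?d * y = 0"
  proof (cases "?a \<noteq> 0 \<or> ?b \<noteq> 0")
    case True
    then show ?thesis
      using det by (intro that[of ?b "- ?a"]) (auto simp: algebra_simps)
  next
    case ab: False
    show ?thesis
    proof (cases "?c \<noteq> 0 \<or> ?d \<noteq> 0")
      case True
      then show ?thesis
        using det by (intro that[of ?d "- ?c"]) (auto simp: algebra_simps)
    next
      case False
      with ab show ?thesis by (intro that[of 1 0]) auto
    qed
  qed
  show ?thesis
  proof (rule that[of "\<lambda>p. if p = 0 then x else y"])
    show "(\<Sum>p<2. (if p = 0 then x else y) * M p r) = \<mu> * (if r = 0 then x else y)" if "r < 2" for r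
      using xy(2,3) that by (auto simp: numeral_2_eq_2 less_Suc_eq algebra_simps)
  qed (use xy(1) in auto)
qed

lemma char_eq_2x2_of_right_eigenvector:
  fixes a b c d x y :: "'a :: field"
  assumes "a * x + b * y = \<mu> * x" "c * x + d * y = \<mu> * y" "x \<noteq> 0 \<or> y \<noteq> 0"
  shows "(\<mu> - a) * (\<mu> - d) = b * c"
proof -
  have x: "(\<mu> - a) * x = b * y" and y: "(\<mu> - d) * y = c * x"
    using assms(1,2) by (simp_all add: algebra_simps)
  have "(\<mu> - a) * (\<mu> - d) * x = (\<mu> - d) * ((\<mu> - a) * x)"
    by (simp only: mult_ac)
  also have "\<dots> = b * ((\<mu> - d) * y)"
    unfolding x by (simp only: mult_ac)
  also have "\<dots> = b * c * x"
    unfolding y by (simp only: mult_ac)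
  finally have "(\<mu> - a) * (\<mu> - d) * x = b * c * x" .
  have "(\<mu> - a) * (\<mu> - d) * y = (\<mu> - a) * ((\<mu> - d) * y)"
    by (simp only: mult_ac)
  also have "\<dots> = c * ((\<mu> - a) * x)"
    unfolding y by (simp only: mult_ac)
  also have "\<dots> = b * c * y"
    unfolding x by (simp only: mult_ac)
  finally have "(\<mu> - a) * (\<mu> - d) * y = b * c * y" .
  with \<open>(\<mu> - a) * (\<mu> - d) * x = b * c * x\<close> show ?thesis
    using assms(3) by auto
qed

section \<open>The group \<open>U\<^sub>6\<^sub>n\<close>\<close>

lemma elt_eq_iff:
  "elt n i e = elt n j d \<longleftrightarrow> i mod (2 * int n) = j mod (2 * int n) \<and> e mod 3 = d mod 3"
  by (simp add: elt_def prod_eq_iff)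

lemma even_mod_double: "even (i mod (2 * int n)) \<longleftrightarrow> even i"
  by (simp add: even_iff_mod_2_eq_zero mod_mod_cancel)

lemma umult_elt:
  "umult n (elt n i e) (elt n j d) = elt n (i + j) ((if even j then e else - e) + d)"
  unfolding umult_def elt_def[of n j d] by (auto simp: elt_def even_mod_double mod_simps)

lemma uinv_elt: "uinv n (elt n i e) = elt n (- i) (if even i then - e else e)"
  unfolding uinv_def elt_def[of n i e] by (auto simp: elt_def even_mod_double mod_simps)

lemma U_elt_cases:
  assumes "x \<in> U n" obtains i e where "x = elt n i e"
proof -
  from assms have "x = elt n (fst x) (snd x)" by (cases x) (simp add: U_def elt_def)
  then show thesis by (rule that)
qed

lemma elt_in_U [simp]: "n \<ge> 1 \<Longrightarrow> elt n i e \<in> U n"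
  by (simp add: elt_def U_def)

definition U_group :: "nat \<Rightarrow> uelt monoid" where
  "U_group n = \<lparr>carrier = U n, mult = umult n, one = uone n\<rparr>"

lemma U_group_simps [simp]:
  "carrier (U_group n) = U n" "mult (U_group n) = umult n" "one (U_group n) = uone n"
  by (simp_all add: U_group_def)

lemma group_U_group:
  assumes "n \<ge> 1" shows "group (U_group n)"
proof (rule groupI)
  fix x y z assume "x \<in> carrier (U_group n)" "y \<in> carrier (U_group n)" "z \<in> carrier (U_group n)"
  then obtain i e j d k f where "x = elt n i e" "y = elt n j d" "z = elt n k f"
    by (auto elim!: U_elt_cases)
  then show "x \<otimes>\<^bsub>U_group n\<^esub> y \<otimes>\<^bsub>U_group n\<^esub> z = x \<otimes>\<^bsub>U_group n\<^esub> (y \<otimes>\<^bsub>U_group n\<^esub> z)"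
    by (auto simp: umult_elt elt_eq_iff algebra_simps)
next
  fix x assume "x \<in> carrier (U_group n)"
  then obtain i e where x: "x = elt n i e" by (auto elim!: U_elt_cases)
  show "\<one>\<^bsub>U_group n\<^esub> \<otimes>\<^bsub>U_group n\<^esub> x = x"
    by (simp add: x uone_def umult_elt)
  show "\<exists>y\<in>carrier (U_group n). y \<otimes>\<^bsub>U_group n\<^esub> x = \<one>\<^bsub>U_group n\<^esub>"
    using assms by (intro bexI[of _ "uinv n x"]) (auto simp: x uone_def uinv_elt umult_elt elt_eq_iff)
qed (use assms in \<open>auto simp: umult_def uone_def split: prod.splits\<close>)

lemma m_inv_U_group:
  assumes "n \<ge> 1" "x \<in> U n" shows "inv\<^bsub>U_group n\<^esub> x = uinv n x"
proof -
  interpret group "U_group n" by (rule group_U_group[OF assms(1)])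
  obtain i e where x: "x = elt n i e" using assms(2) by (elim U_elt_cases)
  show ?thesis
    using assms by (intro inv_equality) (auto simp: x uone_def uinv_elt umult_elt elt_eq_iff)
qed

lemma uone_eq: "uone n = (0, 0)"
  by (simp add: uone_def elt_def)

lemma finite_U [simp]: "finite (U n)"
  by (simp add: U_def)

lemma umult_in_U: "n \<ge> 1 \<Longrightarrow> umult n x y \<in> U n"
  by (cases x; cases y) (simp add: umult_def)

lemma uinv_in_U: "n \<ge> 1 \<Longrightarrow> uinv n x \<in> U n"
  by (cases x) (simp add: uinv_def)

lemma sum_left_translate:
  assumes "n \<ge> 1" "s \<in> U n"
  shows "(\<Sum>g\<in>U n. f (umult n s g)) = (\<Sum>g\<in>U n. f g)"
proof -
  interpret group "U_group n" by (rule group_U_group[OF assms(1)])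
  show ?thesis
    using sum.reindex[OF inj_on_cmult[of s], of f] surj_const_mult[of s] assms(2)
    by (simp add: comp_def)
qed

lemma inj_on_right_mult:
  assumes "n \<ge> 1" "S \<subseteq> U n" "g \<in> U n"
  shows "inj_on (\<lambda>s. umult n s g) S"
proof -
  interpret group "U_group n" by (rule group_U_group[OF assms(1)])
  show ?thesis
    using inj_on_multc[of g] assms(2,3) by (auto intro: inj_on_subset)
qed

lemma uinv_uinv: "n \<ge> 1 \<Longrightarrow> x \<in> U n \<Longrightarrow> uinv n (uinv n x) = x"
  using group.inv_inv[OF group_U_group] by (metis U_group_simps(1) m_inv_U_group uinv_in_U)

lemma uinv_umult_eq_one_iff:
  assumes "n \<ge> 1" "g \<in> U n" "h \<in> U n"
  shows "umult n (uinv n g) h = uone n \<longleftrightarrow> h = g"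
proof -
  interpret group "U_group n" by (rule group_U_group[OF assms(1)])
  have "uone n = umult n (uinv n g) h \<longleftrightarrow> h = umult n g (uone n)"
    using inv_solve_left[of "uone n" g h] one_closed assms by (simp add: m_inv_U_group)
  then show ?thesis
    using r_one[of g] assms by auto
qed

lemma umult_uinv_cancel_left:
  assumes "n \<ge> 1" "s \<in> U n" "g \<in> U n"
  shows "umult n s (umult n (uinv n s) g) = g"
proof -
  interpret group "U_group n" by (rule group_U_group[OF assms(1)])
  show ?thesis
    using inv_solve_left[of "umult n (uinv n s) g" s g] assms
    by (simp add: m_inv_U_group umult_in_U uinv_in_U)
qed

lemma sum_uinv:
  assumes "n \<ge> 1" "S \<subseteq> U n" "uinvset n S = S"
  shows "(\<Sum>s\<in>S. f (uinv n s)) = (\<Sum>s\<in>S. f s)"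
proof -
  have "inj_on (uinv n) S"
    using assms(1,2) uinv_uinv by (metis inj_on_inverseI subsetD)
  then show ?thesis
    using sum.reindex[of "uinv n" S f] assms(3) by (simp add: uinvset_def comp_def)
qed

section \<open>Characters and two-dimensional representations\<close>

lemma fst_umult: "fst (umult n x y) = (fst x + fst y) mod (2 * int n)"
  by (cases x; cases y) (simp add: umult_def elt_def)

lemma omega_int_fst_umult:
  "omega_int n (j * fst (umult n x y)) = omega_int n (j * fst x) * omega_int n (j * fst y)"
  by (simp add: fst_umult omega_int_mult_mod distrib_left omega_int_add)

lemma omega_int_fst_elt: "omega_int n (j * fst (elt n i e)) = omega_int n (j * i)"
  by (simp add: elt_def omega_int_mult_mod)

lemma omega_pow_half:
  "0 \<le> i \<Longrightarrow> even i \<Longrightarrow> omega n ^ (2 * j * nat (i div 2)) = omega_int n (int j * i)"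
  by (simp add: omega_pow ac_simps)

lemma chi_eq: "x \<in> U n \<Longrightarrow> chi n j x = omega_int n (int j * fst x)"
proof -
  assume "x \<in> U n"
  then obtain i e where x: "x = (i, e)" and "0 \<le> i" by (auto simp: U_def)
  have "omega n ^ (j * (2 * nat (i div 2) + 1)) = omega_int n (int j * i)" if "odd i"
    using that \<open>0 \<le> i\<close> by (elim oddE) (simp add: omega_pow algebra_simps)
  with \<open>0 \<le> i\<close> show ?thesis
    by (simp add: x chi_def omega_pow_half)
qed

lemma rho_eq: "0 \<le> fst x \<Longrightarrow> rho n j x = omega_int n (int j * fst x)"
  by (simp add: rho_def omega_pow)

text \<open>Matrix entries (\<open>p, q \<in> {0, 1}\<close>) of the representation induced from the character
  \<open>a\<^sup>2\<^sup>r b\<^sup>e \<mapsto> \<omega>\<^sup>2\<^sup>k\<^sup>r \<zeta>\<^sup>e\<close> of \<open>\<langle>a\<^sup>2, b\<rangle>\<close>, with \<open>\<zeta>\<close> a primitive cube root of unity; its trace is \<open>\<psi>\<^sub>k\<close>.\<close>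

definition ind_rep :: "nat \<Rightarrow> int \<Rightarrow> uelt \<Rightarrow> nat \<Rightarrow> nat \<Rightarrow> complex" where
  "ind_rep n k x p q = (if even (int p + int q + fst x)
      then omega_int n (k * fst x) * zeta3 (if q = 0 then snd x else - snd x) else 0)"

lemma zeta3_uminus_mod: "zeta3 (- (e mod 3)) = zeta3 (- e)"
  by (metis zeta3_mod mod_minus_eq)

lemma ind_rep_elt:
  "ind_rep n k (elt n i e) p q = (if even (int p + int q + i)
      then omega_int n (k * i) * zeta3 (if q = 0 then e else - e) else 0)"
  by (simp add: ind_rep_def elt_def even_mod_double omega_int_mult_mod zeta3_mod zeta3_uminus_mod
      even_add)

lemma ind_rep_elt_even:
  "even i \<Longrightarrow> p < 2 \<Longrightarrow> q < 2 \<Longrightarrow> ind_rep n k (elt n i e) p q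
    = (if p = q then omega_int n (k * i) * zeta3 (if q = 0 then e else - e) else 0)"
  by (auto simp: ind_rep_elt less_2_cases_iff)

lemma ind_rep_mult:
  assumes "p < 2" "q < 2"
  shows "ind_rep n k (umult n x y) p q = (\<Sum>r<2. ind_rep n k x p r * ind_rep n k y r q)"
proof -
  obtain i e j d where xy: "x = (i, e)" "y = (j, d)" by fastforce
  have "umult n (i, e) (j, d) = elt n (i + j) ((if even j then e else - e) + d)"
    by (simp add: umult_def)
  moreover have "p = 0 \<or> p = 1" "q = 0 \<or> q = 1"
    using assms by auto
  ultimately show ?thesis
    unfolding xy by (simp only: ind_rep_elt) (elim disjE; cases "even i"; cases "even j";
      simp add: ind_rep_def numeral_2_eq_2 omega_int_add zeta3_add zeta3_diff distrib_left)
qed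

lemma ind_rep_uone: "p < 2 \<Longrightarrow> q < 2 \<Longrightarrow> ind_rep n k (uone n) p q = (if p = q then 1 else 0)"
  by (auto simp: ind_rep_def uone_eq zeta3_def less_2_cases_iff)

lemma psi_eq: "x \<in> U n \<Longrightarrow> psi n k x = ind_rep n (int k) x 0 0 + ind_rep n (int k) x 1 1"
proof -
  assume "x \<in> U n"
  then obtain i e where x: "x = (i, e)" and "0 \<le> i" "0 \<le> e" "e < 3" by (auto simp: U_def)
  then have "zeta3 e + zeta3 (- e) = (if e = 0 then 2 else -1)"
    using zeta3_add_uminus[of e] by auto
  with \<open>0 \<le> i\<close> show ?thesis
    by (simp add: x psi_def ind_rep_def omega_pow_half distrib_left[symmetric])
qed

section \<open>Eigenvalues of Cayley graphs on \<open>U\<^sub>6\<^sub>n\<close>\<close>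

lemma cay_adj_sum:
  assumes "n \<ge> 1" "S \<subseteq> U n" "g \<in> U n"
  shows "(\<Sum>h\<in>U n. cay_adj n S g h * v h) = (\<Sum>s\<in>S. v (umult n s g))"
proof -
  let ?T = "(\<lambda>s. umult n s g) ` S"
  have "(\<Sum>h\<in>U n. cay_adj n S g h * v h) = (\<Sum>h\<in>U n. if h \<in> ?T then v h else 0)"
    by (rule sum.cong) (auto simp: cay_adj_def)
  also have "\<dots> = sum v ?T"
    using umult_in_U[OF assms(1)] by (simp add: sum.If_cases Int_absorb1 image_subset_iff)
  also have "\<dots> = (\<Sum>s\<in>S. v (umult n s g))"
    using sum.reindex[OF inj_on_right_mult[OF assms]] by (simp add: comp_def)
  finally show ?thesis .
qed

lemma cay_eigenvalue_iff:
  assumes "n \<ge> 1" "S \<subseteq> U n"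
  shows "cay_eigenvalue n S \<mu> \<longleftrightarrow>
    (\<exists>v. (\<exists>g\<in>U n. v g \<noteq> 0) \<and> (\<forall>g\<in>U n. (\<Sum>s\<in>S. v (umult n s g)) = \<mu> * v g))"
  unfolding cay_eigenvalue_def using cay_adj_sum[OF assms] by simp

definition lin_char_sum :: "nat \<Rightarrow> uelt set \<Rightarrow> int \<Rightarrow> complex" where
  "lin_char_sum n T j = (\<Sum>s\<in>T. omega_int n (j * fst s))"

lemma sum_lin_char_umult:
  "(\<Sum>s\<in>T. omega_int n (j * fst (umult n s g))) = lin_char_sum n T j * omega_int n (j * fst g)"
  by (simp add: lin_char_sum_def omega_int_fst_umult sum_distrib_right)

lemma cay_eigenvalue_linear:
  assumes "n \<ge> 1" "S \<subseteq> U n"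
  shows "cay_eigenvalue n S (lin_char_sum n S j)"
  unfolding cay_eigenvalue_iff[OF assms]
proof (intro exI conjI ballI)
  show "\<exists>g\<in>U n. omega_int n (j * fst g) \<noteq> 0"
    using assms(1) by (intro bexI[of _ "(0, 0)"]) (auto simp: U_def)
qed (rule sum_lin_char_umult)

definition ind_rep_sum :: "nat \<Rightarrow> int \<Rightarrow> uelt set \<Rightarrow> nat \<Rightarrow> nat \<Rightarrow> complex" where
  "ind_rep_sum n k S p q = (\<Sum>s\<in>S. ind_rep n k s p q)"

lemma sum_ind_rep_umult:
  assumes "p < 2" "q < 2"
  shows "(\<Sum>s\<in>S. ind_rep n k (umult n s g) p q) = (\<Sum>r<2. ind_rep_sum n k S p r * ind_rep n k g r q)"
  using assms by (simp add: ind_rep_mult ind_rep_sum_def sum_distrib_right sum.swap[of _ S])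

lemma cay_eigenvalue_ind_rep:
  assumes "n \<ge> 1" "S \<subseteq> U n"
    and "(\<mu> - ind_rep_sum n k S 0 0) * (\<mu> - ind_rep_sum n k S 1 1) = ind_rep_sum n k S 0 1 * ind_rep_sum n k S 1 0"
  shows "cay_eigenvalue n S \<mu>"
proof -
  obtain w where w: "w 0 \<noteq> 0 \<or> w 1 \<noteq> 0"
    and left_eigen: "\<And>r. r < 2 \<Longrightarrow> (\<Sum>p<2. w p * ind_rep_sum n k S p r) = \<mu> * w r"
    using left_eigenvector_2x2[of \<mu> "ind_rep_sum n k S"] assms(3) by blast
  obtain q :: nat where q: "q < 2" "w q \<noteq> 0"
    using w by (metis pos2 one_less_numeral_iff semiring_norm(76))
  show ?thesis
    unfolding cay_eigenvalue_iff[OF assms(1,2)]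
  proof (intro exI conjI ballI)
    have "(\<Sum>p<2. w p * ind_rep n k (uone n) p q) = w q"
      using q by (auto simp: ind_rep_uone numeral_2_eq_2 less_Suc_eq)
    then show "\<exists>g\<in>U n. (\<Sum>p<2. w p * ind_rep n k g p q) \<noteq> 0"
      using q assms(1) by (intro bexI[of _ "uone n"]) (auto simp: uone_eq U_def)
    fix g
    have "(\<Sum>s\<in>S. \<Sum>p<2. w p * ind_rep n k (umult n s g) p q)
        = (\<Sum>p<2. w p * (\<Sum>s\<in>S. ind_rep n k (umult n s g) p q))"
      by (simp add: sum_distrib_left) (rule sum.swap)
    also have "\<dots> = (\<Sum>p<2. w p * (\<Sum>r<2. ind_rep_sum n k S p r * ind_rep n k g r q))"
      using q by (intro sum.cong refl) (simp add: sum_ind_rep_umult)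
    also have "\<dots> = (\<Sum>r<2. (\<Sum>p<2. w p * ind_rep_sum n k S p r) * ind_rep n k g r q)"
      by (simp add: numeral_2_eq_2 algebra_simps)
    also have "\<dots> = \<mu> * (\<Sum>p<2. w p * ind_rep n k g p q)"
      by (simp add: left_eigen sum_distrib_left mult.assoc)
    finally show "(\<Sum>s\<in>S. \<Sum>p<2. w p * ind_rep n k (umult n s g) p q) = \<mu> * (\<Sum>p<2. w p * ind_rep n k g p q)" .
  qed
qed

lemma cay_eigenvector_adjoint:
  fixes v \<phi> :: "uelt \<Rightarrow> complex"
  assumes "n \<ge> 1" "S \<subseteq> U n" "uinvset n S = S"
    and eigen: "\<forall>g\<in>U n. (\<Sum>s\<in>S. v (umult n s g)) = \<mu> * v g"
  shows "\<mu> * (\<Sum>g\<in>U n. \<phi> g * v g) = (\<Sum>g\<in>U n. (\<Sum>s\<in>S. \<phi> (umult n s g)) * v g)"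
proof -
  have "\<mu> * (\<Sum>g\<in>U n. \<phi> g * v g) = (\<Sum>g\<in>U n. \<phi> g * (\<mu> * v g))"
    by (simp add: sum_distrib_left mult.left_commute)
  also have "\<dots> = (\<Sum>g\<in>U n. \<phi> g * (\<Sum>s\<in>S. v (umult n s g)))"
    using eigen by simp
  also have "\<dots> = (\<Sum>s\<in>S. \<Sum>g\<in>U n. \<phi> g * v (umult n s g))"
    by (simp add: sum_distrib_left) (rule sum.swap)
  also have "\<dots> = (\<Sum>s\<in>S. \<Sum>g\<in>U n. \<phi> (umult n (uinv n s) g) * v g)"
  proof (rule sum.cong[OF refl])
    fix s assume "s \<in> S"
    with assms(1,2) have s: "s \<in> U n" "uinv n s \<in> U n" by (auto simp: uinv_in_U)
    show "(\<Sum>g\<in>U n. \<phi> g * v (umult n s g)) = (\<Sum>g\<in>U n. \<phi> (umult n (uinv n s) g) * v g)"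
      using sum_left_translate[OF assms(1) s(2), of "\<lambda>g. \<phi> g * v (umult n s g)"] s assms(1)
      by (simp add: umult_uinv_cancel_left)
  qed
  also have "\<dots> = (\<Sum>g\<in>U n. (\<Sum>s\<in>S. \<phi> (umult n (uinv n s) g)) * v g)"
    by (simp add: sum_distrib_right sum.swap[of _ S])
  also have "\<dots> = (\<Sum>g\<in>U n. (\<Sum>s\<in>S. \<phi> (umult n s g)) * v g)"
    using sum_uinv[OF assms(1-3), of "\<lambda>s. \<phi> (umult n s _)"] by simp
  finally show ?thesis .
qed

lemma regular_character:
  assumes "n \<ge> 1" "x \<in> U n"
  shows "(\<Sum>j<2 * n. omega_int n (int j * fst x))
      + 2 * (\<Sum>k<n. ind_rep n (int k) x 0 0 + ind_rep n (int k) x 1 1)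
    = (if x = uone n then of_nat (6 * n) else 0)"
proof -
  obtain i e where x: "x = (i, e)" and i: "0 \<le> i" "i < 2 * int n" and e: "0 \<le> e" "e < 3"
    using assms(2) by (auto simp: U_def)
  show ?thesis
  proof (cases "even i")
    case False
    then show ?thesis
      using sum_omega_int_multiples[OF assms(1) i] by (auto simp: x ind_rep_def uone_eq)
  next
    case True
    then obtain r where r: "i = 2 * r" by blast
    with i have r_bounds: "0 \<le> r" "r < int n" by auto
    have "(\<Sum>k<n. ind_rep n (int k) x 0 0 + ind_rep n (int k) x 1 1)
        = (zeta3 e + zeta3 (- e)) * (\<Sum>k<n. omega_int n (int k * (2 * r)))"
      by (simp add: x r ind_rep_def sum_distrib_left algebra_simps)
    also have "\<dots> = (if e = 0 then 2 else -1) * (if r = 0 then of_nat n else 0)"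
      using zeta3_add_uminus[of e] e sum_omega_int_even_multiples[OF assms(1) r_bounds] by simp
    finally show ?thesis
      using sum_omega_int_multiples[OF assms(1) i] r by (auto simp: x uone_eq)
  qed
qed

lemma fourier_inversion:
  assumes "n \<ge> 1" "g0 \<in> U n"
    and lin: "\<forall>j<2 * n. (\<Sum>g\<in>U n. omega_int n (int j * fst g) * v g) = 0"
    and two: "\<forall>k<n. \<forall>p<2. \<forall>q<2. (\<Sum>g\<in>U n. ind_rep n (int k) g p q * v g) = 0"
  shows "v g0 = 0"
proof -
  define y where "y = uinv n g0"
  have lin_y: "(\<Sum>h\<in>U n. omega_int n (int j * fst (umult n y h)) * v h) = 0" if "j < 2 * n" for j
    using lin that by (simp add: omega_int_fst_umult mult.assoc sum_distrib_left[symmetric])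
  have two_y: "(\<Sum>h\<in>U n. ind_rep n (int k) (umult n y h) p p * v h) = 0" if "k < n" "p < 2" for k p
    using two that by (simp add: ind_rep_mult sum_distrib_right mult.assoc)
      (subst sum.swap, simp add: sum_distrib_left[symmetric])
  have "(\<Sum>h\<in>U n. (if umult n y h = uone n then of_nat (6 * n) else 0) * v h)
      = (\<Sum>h\<in>U n. if h = g0 then of_nat (6 * n) * v h else 0)"
    using assms(1,2) by (intro sum.cong) (auto simp: y_def uinv_umult_eq_one_iff)
  then have "of_nat (6 * n) * v g0 = (\<Sum>h\<in>U n. (if umult n y h = uone n then of_nat (6 * n) else 0) * v h)"
    using assms(2) by simp
  also have "\<dots> = (\<Sum>h\<in>U n. ((\<Sum>j<2 * n. omega_int n (int j * fst (umult n y h)))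
      + 2 * (\<Sum>k<n. ind_rep n (int k) (umult n y h) 0 0 + ind_rep n (int k) (umult n y h) 1 1)) * v h)"
    using regular_character[OF assms(1) umult_in_U[OF assms(1)]] by simp
  also have "\<dots> = (\<Sum>j<2 * n. \<Sum>h\<in>U n. omega_int n (int j * fst (umult n y h)) * v h)
      + 2 * (\<Sum>k<n. (\<Sum>h\<in>U n. ind_rep n (int k) (umult n y h) 0 0 * v h)
                     + (\<Sum>h\<in>U n. ind_rep n (int k) (umult n y h) 1 1 * v h))"
    by (simp add: distrib_right sum.distrib sum_distrib_right sum_distrib_left sum.swap[of _ "U n"]
        mult.assoc)
  also have "\<dots> = 0"
    using lin_y two_y by simp
  finally show ?thesis
    using assms(1) by simp
qed

lemma cay_eigenvector_lin_coeff:
  assumes "n \<ge> 1" "S \<subseteq> U n" "uinvset n S = S"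
    and "\<forall>g\<in>U n. (\<Sum>s\<in>S. v (umult n s g)) = \<mu> * v g"
  shows "\<mu> * (\<Sum>g\<in>U n. omega_int n (j * fst g) * v g)
    = lin_char_sum n S j * (\<Sum>g\<in>U n. omega_int n (j * fst g) * v g)"
proof -
  have "\<mu> * (\<Sum>g\<in>U n. omega_int n (j * fst g) * v g)
      = (\<Sum>g\<in>U n. (\<Sum>s\<in>S. omega_int n (j * fst (umult n s g))) * v g)"
    by (rule cay_eigenvector_adjoint[OF assms])
  then show ?thesis
    by (simp add: sum_lin_char_umult sum_distrib_left mult.assoc)
qed

lemma cay_eigenvector_ind_rep_coeff:
  assumes "n \<ge> 1" "S \<subseteq> U n" "uinvset n S = S"
    and "\<forall>g\<in>U n. (\<Sum>s\<in>S. v (umult n s g)) = \<mu> * v g" and "p < 2" "q < 2"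
  shows "\<mu> * (\<Sum>g\<in>U n. ind_rep n k g p q * v g)
    = (\<Sum>r<2. ind_rep_sum n k S p r * (\<Sum>g\<in>U n. ind_rep n k g r q * v g))"
proof -
  have "\<mu> * (\<Sum>g\<in>U n. ind_rep n k g p q * v g)
      = (\<Sum>g\<in>U n. \<Sum>r<2. ind_rep_sum n k S p r * (ind_rep n k g r q * v g))"
    using assms(5,6)
    by (simp add: cay_eigenvector_adjoint[OF assms(1-4)] sum_ind_rep_umult sum_distrib_right mult.assoc)
  then show ?thesis
    by (simp add: sum.swap[of _ "U n"] sum_distrib_left)
qed

lemma cay_eigenvalue_cases:
  assumes "n \<ge> 1" "S \<subseteq> U n" "uinvset n S = S" "cay_eigenvalue n S \<mu>"
  obtains j where "j < 2 * n" "\<mu> = lin_char_sum n S (int j)"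
    | k where "k < n" "(\<mu> - ind_rep_sum n (int k) S 0 0) * (\<mu> - ind_rep_sum n (int k) S 1 1)
        = ind_rep_sum n (int k) S 0 1 * ind_rep_sum n (int k) S 1 0"
proof -
  obtain v where nonzero: "\<exists>g\<in>U n. v g \<noteq> 0"
    and eigen: "\<forall>g\<in>U n. (\<Sum>s\<in>S. v (umult n s g)) = \<mu> * v g"
    using assms(4) unfolding cay_eigenvalue_iff[OF assms(1,2)] by blast
  consider (lin) j where "j < 2 * n" "(\<Sum>g\<in>U n. omega_int n (int j * fst g) * v g) \<noteq> 0"
    | (two) k p q where "k < n" "p < 2" "q < 2" "(\<Sum>g\<in>U n. ind_rep n (int k) g p q * v g) \<noteq> 0"
    using fourier_inversion[OF assms(1) _ _ _, of _ v] nonzero by blast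
  then show ?thesis
  proof cases
    case lin
    then show ?thesis
      using cay_eigenvector_lin_coeff[OF assms(1-3) eigen, of "int j"] by (intro that(1)) auto
  next
    case two
    define K where "K r = (\<Sum>g\<in>U n. ind_rep n (int k) g r q * v g)" for r
    have "K 0 \<noteq> 0 \<or> K 1 \<noteq> 0"
      using two by (auto simp: K_def less_2_cases_iff)
    with cay_eigenvector_ind_rep_coeff[OF assms(1-3) eigen _ \<open>q < 2\<close>, of _ "int k"] show ?thesis
      by (intro that(2)[OF \<open>k < n\<close>] char_eq_2x2_of_right_eigenvector[of _ "K 0" _ "K 1"])
        (simp_all add: K_def numeral_2_eq_2 lessThan_Suc algebra_simps)
  qed
qed

section \<open>Integral eigenvalues\<close>

lemma algebraic_int_eigenvalue_of_int_mat:
  fixes B :: "int mat" and \<mu> :: complex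
  assumes B: "B \<in> carrier_mat N N" and "eigenvalue (map_mat of_int B) \<mu>"
  shows "algebraic_int \<mu>"
proof -
  have "poly (char_poly (map_mat of_int B)) \<mu> = 0"
    using eigenvalue_root_char_poly[of "map_mat (of_int :: int \<Rightarrow> complex) B" N] assms by simp
  moreover have "char_poly (map_mat (of_int :: int \<Rightarrow> complex) B) = map_poly of_int (char_poly B)"
    by (rule of_int_hom.char_poly_hom[OF B])
  moreover have "lead_coeff (char_poly B) = 1"
    using degree_monic_char_poly[OF B] by simp
  ultimately show ?thesis
    unfolding algebraic_int_altdef_ipoly by auto
qed

lemma rational_eigenvalue_of_int_matrix_in_Ints:
  fixes I :: "'a set" and M :: "'a \<Rightarrow> 'a \<Rightarrow> int" and v :: "'a \<Rightarrow> complex"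
  assumes "finite I" "\<exists>g\<in>I. v g \<noteq> 0"
    and eigen: "\<forall>g\<in>I. (\<Sum>h\<in>I. of_int (M g h) * v h) = \<mu> * v g" and "\<mu> \<in> \<rat>"
  shows "\<mu> \<in> \<int>"
proof -
  define N where "N = card I"
  obtain f where f: "bij_betw f {0..<N} I"
    using ex_bij_betw_nat_finite[OF assms(1)] N_def by blast
  define B where "B = mat N N (\<lambda>(i, j). M (f i) (f j))"
  define w where "w = vec N (\<lambda>i. v (f i))"
  have B: "B \<in> carrier_mat N N"
    by (simp add: B_def)
  have "eigenvector (map_mat of_int B) w \<mu>"
    unfolding eigenvector_def
  proof (intro conjI)
    obtain i where i: "i < N" "v (f i) \<noteq> 0"
      using assms(2) f by (auto simp: bij_betw_def image_iff)
    then show "w \<noteq> 0\<^sub>v (dim_row (map_mat of_int B))"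
      by (auto simp: w_def B_def vec_eq_iff)
    show "map_mat of_int B *\<^sub>v w = \<mu> \<cdot>\<^sub>v w"
    proof (rule eq_vecI)
      fix i assume "i < dim_vec (\<mu> \<cdot>\<^sub>v w)"
      then have i: "i < N" by (simp add: w_def)
      have "(map_mat of_int B *\<^sub>v w) $ i = (\<Sum>j<N. of_int (M (f i) (f j)) * v (f j))"
        using i by (simp add: B_def w_def scalar_prod_def atLeast0LessThan mult.commute)
      also have "\<dots> = (\<Sum>h\<in>I. of_int (M (f i) h) * v h)"
        using sum.reindex_bij_betw[OF f] by (simp add: atLeast0LessThan)
      also have "\<dots> = \<mu> * v (f i)"
        using eigen f i by (auto simp: bij_betw_def)
      finally show "(map_mat of_int B *\<^sub>v w) $ i = (\<mu> \<cdot>\<^sub>v w) $ i"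
        using i by (simp add: w_def)
    qed (simp add: B_def w_def)
  qed (simp add: B_def w_def)
  then have "algebraic_int \<mu>"
    using algebraic_int_eigenvalue_of_int_mat[OF B] by (auto simp: eigenvalue_def)
  with \<open>\<mu> \<in> \<rat>\<close> show ?thesis
    using rational_algebraic_int_is_int by blast
qed

lemma cay_eigenvalue_in_Ints:
  assumes "n \<ge> 1" "S \<subseteq> U n" "cay_eigenvalue n S \<mu>" "\<mu> \<in> \<rat>"
  shows "\<mu> \<in> \<int>"
proof -
  obtain v where "\<exists>g\<in>U n. v g \<noteq> 0" "\<forall>g\<in>U n. (\<Sum>h\<in>U n. cay_adj n S g h * v h) = \<mu> * v g"
    using assms(3) unfolding cay_eigenvalue_def by blast
  then show ?thesis
    by (intro rational_eigenvalue_of_int_matrix_in_Ints[OF finite_U,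
          where M = "\<lambda>g h. if \<exists>s\<in>S. h = umult n s g then 1 else 0"] assms(4))
      (simp_all add: cay_adj_def if_distrib cong: if_cong)
qed

text \<open>The difference is an eigenvalue, for the eigenvector \<open>\<chi>\<^sub>j\<close>, of the difference of the
  adjacency matrices of \<open>Cay(U\<^sub>6\<^sub>n, T\<^sub>1)\<close> and \<open>Cay(U\<^sub>6\<^sub>n, T\<^sub>2)\<close>.\<close>

lemma lin_char_sum_diff_in_Ints:
  assumes "n \<ge> 1" "T1 \<subseteq> U n" "T2 \<subseteq> U n"
    and "lin_char_sum n T1 j - lin_char_sum n T2 j \<in> \<rat>"
  shows "lin_char_sum n T1 j - lin_char_sum n T2 j \<in> \<int>"
proof -
  define M :: "uelt \<Rightarrow> uelt \<Rightarrow> int" where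
    "M g h = of_bool (\<exists>s\<in>T1. h = umult n s g) - of_bool (\<exists>s\<in>T2. h = umult n s g)" for g h
  have "(\<Sum>h\<in>U n. of_int (M g h) * omega_int n (j * fst h))
      = (lin_char_sum n T1 j - lin_char_sum n T2 j) * omega_int n (j * fst g)" if g: "g \<in> U n" for g
  proof -
    have "(\<Sum>h\<in>U n. of_int (M g h) * omega_int n (j * fst h))
      = (\<Sum>h\<in>U n. cay_adj n T1 g h * omega_int n (j * fst h))
        - (\<Sum>h\<in>U n. cay_adj n T2 g h * omega_int n (j * fst h))"
      unfolding sum_subtractf[symmetric] by (intro sum.cong) (simp_all add: M_def cay_adj_def)
    then show ?thesis
      by (simp add: cay_adj_sum[OF assms(1) _ g] assms(2,3) sum_lin_char_umult left_diff_distrib)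
  qed
  moreover have "\<exists>g\<in>U n. omega_int n (j * fst g) \<noteq> 0"
    using assms(1) by (intro bexI[of _ "(0, 0)"]) (auto simp: U_def)
  ultimately show ?thesis
    by (intro rational_eigenvalue_of_int_matrix_in_Ints[OF finite_U _ _ assms(4)]) auto
qed

lemma conditions_of_integral_eigenvalues:
  fixes a b x t :: complex
  assumes "a + 2 * b + x \<in> \<int>" "a - b + t \<in> \<int>" "a - b - t \<in> \<int>"
    and "a - b \<in> \<rat> \<Longrightarrow> a - b \<in> \<int>"
  shows "3 * a + x \<in> \<int>" "3 * b + x \<in> \<int>" "\<exists>m::int. 4 * t\<^sup>2 = of_int (m\<^sup>2)"
proof -
  have "a - b = ((a - b + t) + (a - b - t)) / 2"
    by simp
  also have "\<dots> \<in> \<rat>"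
    using Ints_add[OF assms(2,3)] by (intro Rats_divide) (auto intro: set_mp[OF Ints_subset_Rats])
  finally have c: "a - b \<in> \<int>"
    by (rule assms(4))
  show "3 * a + x \<in> \<int>"
    using Ints_add[OF assms(1) Ints_mult[OF Ints_of_int[of 2] c]] by (simp add: algebra_simps)
  show "3 * b + x \<in> \<int>"
    using Ints_diff[OF assms(1) c] by (simp add: algebra_simps)
  obtain m where "(a - b + t) - (a - b - t) = of_int m"
    using Ints_diff[OF assms(2,3)] by (elim Ints_cases)
  then have "2 * t = of_int m"
    by simp
  have "4 * t\<^sup>2 = (2 * t)\<^sup>2"
    by (simp add: power_mult_distrib)
  also have "\<dots> = of_int (m\<^sup>2)"
    using \<open>2 * t = of_int m\<close> by simp
  finally have "4 * t\<^sup>2 = of_int (m\<^sup>2)" .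
  then show "\<exists>m::int. 4 * t\<^sup>2 = of_int (m\<^sup>2)" ..
qed

lemma Rats_of_shifted_square:
  fixes \<mu> c d :: complex
  assumes "(\<mu> - c)\<^sup>2 = d" "4 * d = of_int (m\<^sup>2)" "c \<in> \<rat>"
  shows "\<mu> \<in> \<rat>"
proof -
  have "(2 * (\<mu> - c))\<^sup>2 = 4 * (\<mu> - c)\<^sup>2"
    by (simp only: power_mult_distrib) simp
  also have "\<dots> = (of_int m)\<^sup>2"
    using assms(1,2) by simp
  finally have "(2 * (\<mu> - c))\<^sup>2 = (of_int m)\<^sup>2" .
  then have "2 * (\<mu> - c) = of_int m \<or> 2 * (\<mu> - c) = - of_int m"
    by (simp add: power2_eq_iff)
  then have "\<mu> = c + of_int m / 2 \<or> \<mu> = c - of_int m / 2"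
    by (auto simp: field_simps)
  with assms(3) show ?thesis
    by (auto intro: Rats_add Rats_diff Rats_divide)
qed

lemma inj_on_elt_double:
  assumes "A \<subseteq> {0..<n}" "c = 2 \<or> c = -2"
  shows "inj_on (\<lambda>r. elt n (c * int r) e) A"
proof (rule inj_onI)
  fix r r' assume "r \<in> A" "r' \<in> A" "elt n (c * int r) e = elt n (c * int r') e"
  then have "2 * int n dvd c * int r - c * int r'" and "r < n" "r' < n"
    using assms(1) by (auto simp: elt_eq_iff mod_eq_dvd_iff)
  moreover have "c * int r - c * int r' = 2 * (int r - int r') \<or>
      c * int r - c * int r' = - (2 * (int r - int r'))"
    using assms(2) by auto
  ultimately have "2 * int n dvd 2 * (int r - int r')"
    by (metis dvd_minus_iff)
  then have "int n dvd int r - int r'"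
    using dvd_mult_cancel_left[of 2 "int n" "int r - int r'"] by simp
  with \<open>r < n\<close> \<open>r' < n\<close> show "r = r'"
    using dvd_imp_le_int[of "int r - int r'" "int n"] by fastforce
qed

lemma sum_image_elt_double:
  "A \<subseteq> {0..<n} \<Longrightarrow> c = 2 \<or> c = -2 \<Longrightarrow>
    (\<Sum>x\<in>(\<lambda>r. elt n (c * int r) e) ` A. f x) = (\<Sum>r\<in>A. f (elt n (c * int r) e))"
  using sum.reindex[OF inj_on_elt_double] by (simp add: comp_def)

definition even_power_sum :: "nat \<Rightarrow> nat set \<Rightarrow> int \<Rightarrow> complex" where
  "even_power_sum n A j = (\<Sum>r\<in>A. omega_int n (j * (2 * int r)))"

lemma lin_char_sum_even_elts:
  "A \<subseteq> {0..<n} \<Longrightarrow> lin_char_sum n ((\<lambda>r. elt n (2 * int r) 0) ` A) j = even_power_sum n A j"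
  by (simp add: lin_char_sum_def sum_image_elt_double omega_int_fst_elt even_power_sum_def)

lemma charsum_rho_even_elts:
  assumes "n \<ge> 1" "A \<subseteq> {0..<n}"
  shows "charsum (rho n j) ((\<lambda>r. elt n (2 * int r) 0) ` A) = even_power_sum n A (int j)"
proof -
  have "0 \<le> fst (elt n i e)" for i e
    using assms(1) by (simp add: elt_def)
  then have "rho n j (elt n (2 * int r) 0) = omega_int n (int j * (2 * int r))" for r
    by (simp add: rho_eq omega_int_fst_elt)
  then show ?thesis
    using assms(2) by (simp add: charsum_def sum_image_elt_double even_power_sum_def)
qed

lemma even_power_sum_uminus:
  assumes "n \<ge> 1" "A \<subseteq> {0..<n}"
    and "uinvset n ((\<lambda>r. elt n (2 * int r) 0) ` A) = (\<lambda>r. elt n (2 * int r) 0) ` A"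
  shows "(\<Sum>r\<in>A. omega_int n (j * (- 2 * int r))) = even_power_sum n A j"
proof -
  have "(\<Sum>s\<in>(\<lambda>r. elt n (2 * int r) 0) ` A. omega_int n (j * fst (uinv n s)))
      = (\<Sum>s\<in>(\<lambda>r. elt n (2 * int r) 0) ` A. omega_int n (j * fst s))"
    using assms by (intro sum_uinv) auto
  then show ?thesis
    using assms(2)
    by (simp add: sum_image_elt_double uinv_elt omega_int_fst_elt even_power_sum_def)
qed

lemma charsum_chi_eq: "A \<subseteq> U n \<Longrightarrow> charsum (chi n j) A = lin_char_sum n A (int j)"
  unfolding charsum_def lin_char_sum_def by (rule sum.cong) (auto simp: chi_eq)

lemma ind_rep_sum_odd_diag:
  "A \<subseteq> {(i, e). odd i} \<Longrightarrow> ind_rep_sum n k A p p = 0"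
  by (auto simp: ind_rep_sum_def ind_rep_def intro!: sum.neutral)

lemma charsum2_psi:
  assumes "n \<ge> 1" "A \<subseteq> {(i, e) \<in> U n. odd i}"
  shows "charsum2 n (psi n k) A = 2 * ind_rep_sum n (int k) A 0 1 * ind_rep_sum n (int k) A 1 0"
proof -
  have "charsum2 n (psi n k) A = (\<Sum>p<2. \<Sum>r<2. ind_rep_sum n (int k) A p r * ind_rep_sum n (int k) A r p)"
    unfolding charsum2_def ind_rep_sum_def
    by (simp add: psi_eq umult_in_U[OF assms(1)] ind_rep_mult numeral_2_eq_2 sum.distrib sum_product)
  also have "\<dots> = 2 * ind_rep_sum n (int k) A 0 1 * ind_rep_sum n (int k) A 1 0"
    using ind_rep_sum_odd_diag[of A n "int k"] assms(2) by (force simp: numeral_2_eq_2)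
  finally show ?thesis .
qed

locale U6n_connection_set =
  fixes n :: nat and R L :: "nat set" and S2 S :: "uelt set"
  assumes n_ge_1: "n \<ge> 1"
    and R_subset: "R \<subseteq> {0..<n}" and L_subset: "L \<subseteq> {0..<n}"
    and S2_subset: "S2 \<subseteq> {(i, e) \<in> U n. odd i}"
    and S_eq: "S = (\<lambda>r. elt n (2 * int r) 0) ` R \<union> (\<lambda>l. elt n (2 * int l) 1) ` L
                 \<union> (\<lambda>l. elt n (- 2 * int l) 2) ` L \<union> S2"
    and S_sym: "uinvset n S = S"
    and SL_sym: "uinvset n ((\<lambda>l. elt n (2 * int l) 0) ` L) = (\<lambda>l. elt n (2 * int l) 0) ` L"
begin

abbreviation "rhoR \<equiv> even_power_sum n R"
abbreviation "rhoL \<equiv> even_power_sum n L"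
abbreviation "chiS2 \<equiv> lin_char_sum n S2"
abbreviation "X k \<equiv> ind_rep_sum n k S2 0 1"
abbreviation "Y k \<equiv> ind_rep_sum n k S2 1 0"

lemma S_subset_U: "S \<subseteq> U n"
  using n_ge_1 S2_subset by (auto simp: S_eq)

lemma sum_S:
  "(\<Sum>x\<in>S. f x) = (\<Sum>r\<in>R. f (elt n (2 * int r) 0)) + (\<Sum>l\<in>L. f (elt n (2 * int l) 1))
     + (\<Sum>l\<in>L. f (elt n (- 2 * int l) 2)) + sum f S2"
proof -
  let ?A = "(\<lambda>r. elt n (2 * int r) 0) ` R" and ?B = "(\<lambda>l. elt n (2 * int l) 1) ` L"
    and ?C = "(\<lambda>l. elt n (- 2 * int l) 2) ` L"
  have fin: "finite R" "finite L" "finite S2"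
    using R_subset L_subset S2_subset by (auto intro: finite_subset)
  have "?A \<inter> ?B = {}" "(?A \<union> ?B) \<inter> ?C = {}"
    by (auto simp: elt_def)
  moreover have "(?A \<union> ?B \<union> ?C) \<inter> S2 = {}"
    using S2_subset by (auto simp: elt_def even_mod_double)
  ultimately have "sum f S = sum f ?A + sum f ?B + sum f ?C + sum f S2"
    unfolding S_eq using fin by (simp add: sum.union_disjoint)
  then show ?thesis
    using sum_image_elt_double[OF R_subset, where c = 2 and e = 0 and f = f]
      sum_image_elt_double[OF L_subset, where c = 2 and e = 1 and f = f]
      sum_image_elt_double[OF L_subset, where c = "- 2" and e = 2 and f = f]
    by simp
qed

lemma lin_char_sum_S: "lin_char_sum n S j = rhoR j + 2 * rhoL j + chiS2 j"
  using even_power_sum_uminus[OF n_ge_1 L_subset SL_sym, of j]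
  by (simp add: lin_char_sum_def sum_S omega_int_fst_elt even_power_sum_def)

lemma ind_rep_sum_S:
  assumes "p < 2" "q < 2"
  shows "ind_rep_sum n k S p q = (if p = q then rhoR k - rhoL k else ind_rep_sum n k S2 p q)"
proof -
  have even_part: "(\<Sum>r\<in>A. ind_rep n k (elt n (h r) e) p q)
      = (if p = q then zeta3 (if q = 0 then e else - e) * (\<Sum>r\<in>A. omega_int n (k * h r)) else 0)"
    if "\<And>r. even (h r)" for A h e
    using assms that by (auto simp: ind_rep_elt_even sum_distrib_left ac_simps)
  have combine: "a + zeta3 e1 * b + zeta3 e2 * b = a - b" if "zeta3 e1 + zeta3 e2 = - 1" for a b e1 e2
  proof -
    have "a + zeta3 e1 * b + zeta3 e2 * b = a + (zeta3 e1 + zeta3 e2) * b"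
      by (simp add: algebra_simps)
    with that show ?thesis by simp
  qed
  have "zeta3 1 + zeta3 2 = - 1" "zeta3 (- 1) + zeta3 (- 2) = - 1"
    using zeta3_1_plus_2 zeta3_mod[of "- 1"] zeta3_mod[of "- 2"] by (simp_all add: add.commute)
  moreover have "(\<Sum>s\<in>S2. ind_rep n k s p' p') = 0" for p'
    using S2_subset ind_rep_sum_odd_diag[of S2 n k p'] by (auto simp: ind_rep_sum_def)
  ultimately show ?thesis
    using assms even_power_sum_uminus[OF n_ge_1 L_subset SL_sym, of k]
    by (simp add: ind_rep_sum_def[of _ _ S] sum_S even_part even_power_sum_def ind_rep_sum_def[of _ _ S2]
        combine)
qed

lemma integral_imp_conditions:
  assumes "cay_integral n S"
  shows "3 * rhoR j + chiS2 j \<in> \<int>" "3 * rhoL j + chiS2 j \<in> \<int>" "\<exists>m::int. 4 * (X j * Y j) = of_int (m\<^sup>2)"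
proof -
  have int: "cay_eigenvalue n S \<mu> \<Longrightarrow> \<mu> \<in> \<int>" for \<mu>
    using assms by (simp add: cay_integral_def)
  define t where "t = csqrt (X j * Y j)"
  have t: "t\<^sup>2 = X j * Y j"
    by (simp add: t_def)
  have "rhoR j + 2 * rhoL j + chiS2 j \<in> \<int>"
    using int[OF cay_eigenvalue_linear[OF n_ge_1 S_subset_U]] by (simp add: lin_char_sum_S)
  moreover have "rhoR j - rhoL j + t \<in> \<int>" "rhoR j - rhoL j - t \<in> \<int>"
    using t by (auto intro!: int cay_eigenvalue_ind_rep[OF n_ge_1 S_subset_U, where k = j]
        simp: ind_rep_sum_S power2_eq_square)
  moreover have "rhoR j - rhoL j \<in> \<int>" if "rhoR j - rhoL j \<in> \<rat>"
  proof -
    have "(\<lambda>r. elt n (2 * int r) 0) ` A \<subseteq> U n" for A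
      using elt_in_U[OF n_ge_1] by auto
    then show ?thesis
      using lin_char_sum_diff_in_Ints[OF n_ge_1, of "(\<lambda>r. elt n (2 * int r) 0) ` R"
          "(\<lambda>l. elt n (2 * int l) 0) ` L" j] that R_subset L_subset
      by (simp add: lin_char_sum_even_elts)
  qed
  ultimately show "3 * rhoR j + chiS2 j \<in> \<int>" "3 * rhoL j + chiS2 j \<in> \<int>" "\<exists>m::int. 4 * (X j * Y j) = of_int (m\<^sup>2)"
    using conditions_of_integral_eigenvalues[of "rhoR j" "rhoL j" "chiS2 j" t] t by auto
qed

lemma eigenvalue_in_Rats:
  assumes lin: "\<forall>j<2 * n. 3 * rhoR (int j) + chiS2 (int j) \<in> \<int> \<and> 3 * rhoL (int j) + chiS2 (int j) \<in> \<int>"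
    and two: "\<forall>k<n. \<exists>m::int. 4 * (X (int k) * Y (int k)) = of_int (m\<^sup>2)"
    and "cay_eigenvalue n S \<mu>"
  shows "\<mu> \<in> \<rat>"
proof -
  have diag_Rats: "rhoR (int j) - rhoL (int j) \<in> \<rat>" and linear_Rats: "rhoR (int j) + 2 * rhoL (int j) + chiS2 (int j) \<in> \<rat>"
    if "j < 2 * n" for j
  proof -
    have Rats: "3 * rhoR (int j) + chiS2 (int j) \<in> \<rat>" "3 * rhoL (int j) + chiS2 (int j) \<in> \<rat>"
      using lin that Ints_subset_Rats by blast+
    have "rhoR (int j) - rhoL (int j) = ((3 * rhoR (int j) + chiS2 (int j)) - (3 * rhoL (int j) + chiS2 (int j))) / 3"
      by simp
    also have "\<dots> \<in> \<rat>"
      by (intro Rats_divide Rats_diff Rats) simp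
    finally show "rhoR (int j) - rhoL (int j) \<in> \<rat>" .
    have "rhoR (int j) + 2 * rhoL (int j) + chiS2 (int j)
        = ((3 * rhoR (int j) + chiS2 (int j)) + 2 * (3 * rhoL (int j) + chiS2 (int j))) / 3"
      by simp
    also have "\<dots> \<in> \<rat>"
      by (intro Rats_divide Rats_add[OF Rats(1)] Rats_mult[OF _ Rats(2)]) simp_all
    finally show "rhoR (int j) + 2 * rhoL (int j) + chiS2 (int j) \<in> \<rat>" .
  qed
  from n_ge_1 S_subset_U S_sym assms(3) show ?thesis
  proof (cases rule: cay_eigenvalue_cases)
    case (1 j)
    then show ?thesis
      using linear_Rats[of j] by (simp add: lin_char_sum_S)
  next
    case (2 k)
    then have square: "(\<mu> - (rhoR (int k) - rhoL (int k)))\<^sup>2 = X (int k) * Y (int k)"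
      by (simp add: ind_rep_sum_S power2_eq_square)
    obtain m where "4 * (X (int k) * Y (int k)) = of_int (m\<^sup>2)"
      using two \<open>k < n\<close> by blast
    moreover have "rhoR (int k) - rhoL (int k) \<in> \<rat>"
      using diag_Rats \<open>k < n\<close> by simp
    ultimately show ?thesis
      by (rule Rats_of_shifted_square[OF square])
  qed
qed

theorem cay_integral_iff:
  "cay_integral n S \<longleftrightarrow>
    (\<forall>j<2 * n. 3 * rhoR (int j) + chiS2 (int j) \<in> \<int> \<and> 3 * rhoL (int j) + chiS2 (int j) \<in> \<int>)
    \<and> (\<forall>k<n. \<exists>m::int. 4 * (X (int k) * Y (int k)) = of_int (m\<^sup>2))"
  using integral_imp_conditions eigenvalue_in_Rats cay_eigenvalue_in_Ints[OF n_ge_1 S_subset_U]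
  unfolding cay_integral_def by blast

end

theorem theorem3p2:
  fixes n :: nat and R L :: "nat set" and S2 :: "uelt set"
  assumes "n \<ge> 1"
    and "R \<subseteq> {0..<n}" and "L \<subseteq> {0..<n}"
    and "S2 \<subseteq> {(i, e) \<in> U n. odd i}"
  defines "S1 \<equiv> (\<lambda>r. elt n (2 * int r) 0) ` R
             \<union> (\<lambda>l. elt n (2 * int l) 1) ` L
             \<union> (\<lambda>l. elt n (- 2 * int l) 2) ` L"
  defines "S \<equiv> S1 \<union> S2"
  defines "SR \<equiv> (\<lambda>r. elt n (2 * int r) 0) ` R"
  defines "SL \<equiv> (\<lambda>l. elt n (2 * int l) 0) ` L"
  assumes "uone n \<notin> S" and "uinvset n S = S"
    and "uinvset n SL = SL"
  shows "cay_integral n S \<longleftrightarrow>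
    ((\<forall>j<2 * n. 3 * charsum (rho n j) SR + charsum (chi n j) S2 \<in> \<int>
              \<and> 3 * charsum (rho n j) SL + charsum (chi n j) S2 \<in> \<int>)
     \<and> (\<forall>k<n. \<exists>m::int. 2 * charsum2 n (psi n k) S2 = of_int (m ^ 2)))"
proof -
  interpret U6n_connection_set n R L S2 S
    using assms by unfold_locales (simp_all add: S_def S1_def SL_def)
  have "charsum (rho n j) SR = rhoR (int j)" "charsum (rho n j) SL = rhoL (int j)" for j
    using charsum_rho_even_elts[OF n_ge_1 R_subset] charsum_rho_even_elts[OF n_ge_1 L_subset]
    by (simp_all add: SR_def SL_def)
  moreover have "charsum (chi n j) S2 = chiS2 (int j)" for j
    using S2_subset by (intro charsum_chi_eq) auto
  moreover have "2 * charsum2 n (psi n k) S2 = 4 * (X (int k) * Y (int k))" for k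
    using charsum2_psi[OF n_ge_1 S2_subset] by simp
  ultimately show ?thesis
    by (simp add: cay_integral_iff)
qed

end
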